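(* Let $f\in C(\Omega)$ with $f\ge 0$ in $\Omega$. If $u$ is a viscosity subsolution (resp. supersolution) of the Monge–Ampère equation $M(D^2u(x),f(x))=0$ in $\Omega$ on the set of convex functions, then $u$ is a viscosity subsolution (resp. supersolution) of the Bellman equation $H(D^2u(x),f(x))=0$ in $\Omega$.
   Context: Let $d\ge 2$ and let $\Omega\subset\mathbb R^d$ be a bounded open strictly convex domain. $\mathbb S$ denotes the set of real symmetric $d\times d$ matrices, $\mathbb S_+=\{A\in\mathbb S: A\ge 0\}$ (positive semidefinite matrices), $\mathbb S_1=\{B\in\mathbb S_+:\operatorname{tr}B=1\}$, and $A:B=\operatorname{tr}(A^TB)$ is the Frobenius inner product. For $A\in\mathbb S$ and $f\in[0,\infty)$ define the Bellman operator $H(A,f)=\sup_{B\in\mathbb S_1}\bigl(-B:A+f\sqrt[d]{\det B}\bigr)$ and the Monge–Ampère operator $M(A,f)=(f/d)^d-\det A$. $\mathrm{USC}(G)$, $\mathrm{LSC}(G)$ denote upper/lower semicontinuous functions on $G$. Viscosity notions: for $F:\mathbb S\times\Omega\to\mathbb R$ (here $F(A,x)=H(A,f(x))$ or $F(A,x)=M(A,f(x))$), a function $u\in\mathrm{USC}(\Omega)$ (resp. $u\in\mathrm{LSC}(\Omega)$) is a viscosity subsolution (resp. supersolution) of $F(D^2u(x),x)=0$ in $\Omega$ if for every $\varphi\in C^2(\Omega)$ such that $u-\varphi$ has a local maximum (resp. minimum) at $x\in\Omega$ one has $F(D^2\varphi(x),x)\le 0$ (resp. $\ge 0$); a viscosity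 solution is both a sub- and a supersolution. The function $u$ is a viscosity subsolution (resp. supersolution) on the set of convex functions if $u$ is convex and the same inequality holds for every convex $\varphi\in C^2(\Omega)$ such that $u-\varphi$ has a local maximum (resp. minimum) at $x\in\Omega$; a viscosity solution on the set of convex functions is both. *)

theory Defs
  imports "HOL-Analysis.Analysis"
begin

text \<open>Matrices are elements of real^'n^'n, d = CARD('n).\<close>

definition sym_mat :: "real^'n^'n \<Rightarrow> bool" where
  "sym_mat A \<longleftrightarrow> transpose A = A"

definition psd_mat :: "real^'n^'n \<Rightarrow> bool" where
  "psd_mat A \<longleftrightarrow> sym_mat A \<and> (\<forall>x. 0 \<le> x \<bullet> (A *v x))"

definition trace_mat :: "real^'n^'n \<Rightarrow> real" where
  "trace_mat A = (\<Sum>i\<in>UNIV. A $ i $ i)"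

definition frob :: "real^'n^'n \<Rightarrow> real^'n^'n \<Rightarrow> real" where
  "frob A B = trace_mat (transpose A ** B)"

definition S1 :: "(real^'n^'n) set" where
  "S1 = {B. psd_mat B \<and> trace_mat B = 1}"

definition bellman :: "real^'n^'n \<Rightarrow> real \<Rightarrow> real" where
  "bellman A f = (SUP B\<in>(S1 :: (real^'n^'n) set). - frob B A + f * root CARD('n) (det B))"

definition monge_ampere :: "real^'n^'n \<Rightarrow> real \<Rightarrow> real" where
  "monge_ampere A f = (f / real CARD('n)) ^ CARD('n) - det A"

definition strictly_convex_set :: "(real^'n) set \<Rightarrow> bool" where
  "strictly_convex_set \<Omega> \<longleftrightarrow>
     (\<forall>x\<in>closure \<Omega>. \<forall>y\<in>closure \<Omega>. \<forall>t::real. x \<noteq> y \<and> 0 < t \<and> t < 1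
        \<longrightarrow> (1 - t) *\<^sub>R x + t *\<^sub>R y \<in> \<Omega>)"

definition usc_on :: "(real^'n) set \<Rightarrow> (real^'n \<Rightarrow> real) \<Rightarrow> bool" where
  "usc_on G u \<longleftrightarrow> (\<forall>x\<in>G. \<forall>a. u x < a \<longrightarrow> (\<forall>\<^sub>F y in at x within G. u y < a))"

definition lsc_on :: "(real^'n) set \<Rightarrow> (real^'n \<Rightarrow> real) \<Rightarrow> bool" where
  "lsc_on G u \<longleftrightarrow> (\<forall>x\<in>G. \<forall>a. a < u x \<longrightarrow> (\<forall>\<^sub>F y in at x within G. a < u y))"

definition C2_hess :: "(real^'n) set \<Rightarrow> (real^'n \<Rightarrow> real) \<Rightarrow> (real^'n \<Rightarrow> real^'n^'n) \<Rightarrow> bool" where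
  "C2_hess G \<phi> Hs \<longleftrightarrow> (\<exists>g :: real^'n \<Rightarrow> real^'n.
      (\<forall>x\<in>G. (\<phi> has_derivative (\<lambda>h. g x \<bullet> h)) (at x)) \<and>
      (\<forall>x\<in>G. (g has_derivative (\<lambda>h. Hs x *v h)) (at x)) \<and>
      continuous_on G g \<and> continuous_on G Hs)"

definition loc_max_at :: "(real^'n) set \<Rightarrow> (real^'n \<Rightarrow> real) \<Rightarrow> real^'n \<Rightarrow> bool" where
  "loc_max_at G w x \<longleftrightarrow> (\<exists>e>0. \<forall>y\<in>G. dist y x < e \<longrightarrow> w y \<le> w x)"

definition loc_min_at :: "(real^'n) set \<Rightarrow> (real^'n \<Rightarrow> real) \<Rightarrow> real^'n \<Rightarrow> bool" where
  "loc_min_at G w x \<longleftrightarrow> (\<exists>e>0. \<forall>y\<in>G. dist y x < e \<longrightarrow> w x \<le> w y)"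

definition visc_sub :: "(real^'n^'n \<Rightarrow> real^'n \<Rightarrow> real) \<Rightarrow> (real^'n) set \<Rightarrow> (real^'n \<Rightarrow> real) \<Rightarrow> bool" where
  "visc_sub F G u \<longleftrightarrow> usc_on G u \<and>
     (\<forall>\<phi> Hs x. C2_hess G \<phi> Hs \<and> x \<in> G \<and> loc_max_at G (\<lambda>y. u y - \<phi> y) x \<longrightarrow> F (Hs x) x \<le> 0)"

definition visc_super :: "(real^'n^'n \<Rightarrow> real^'n \<Rightarrow> real) \<Rightarrow> (real^'n) set \<Rightarrow> (real^'n \<Rightarrow> real) \<Rightarrow> bool" where
  "visc_super F G u \<longleftrightarrow> lsc_on G u \<and>
     (\<forall>\<phi> Hs x. C2_hess G \<phi> Hs \<and> x \<in> G \<and> loc_min_at G (\<lambda>y. u y - \<phi> y) x \<longrightarrow> 0 \<le> F (Hs x) x)"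

text \<open>Same notions on the set of convex functions: u convex, only convex test functions.\<close>
definition visc_sub_convex :: "(real^'n^'n \<Rightarrow> real^'n \<Rightarrow> real) \<Rightarrow> (real^'n) set \<Rightarrow> (real^'n \<Rightarrow> real) \<Rightarrow> bool" where
  "visc_sub_convex F G u \<longleftrightarrow> usc_on G u \<and> convex_on G u \<and>
     (\<forall>\<phi> Hs x. C2_hess G \<phi> Hs \<and> convex_on G \<phi> \<and> x \<in> G \<and> loc_max_at G (\<lambda>y. u y - \<phi> y) x
        \<longrightarrow> F (Hs x) x \<le> 0)"

definition visc_super_convex :: "(real^'n^'n \<Rightarrow> real^'n \<Rightarrow> real) \<Rightarrow> (real^'n) set \<Rightarrow> (real^'n \<Rightarrow> real) \<Rightarrow> bool" where
  "visc_super_convex F G u \<longleftrightarrow> lsc_on G u \<and> convex_on G u \<and>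
     (\<forall>\<phi> Hs x. C2_hess G \<phi> Hs \<and> convex_on G \<phi> \<and> x \<in> G \<and> loc_min_at G (\<lambda>y. u y - \<phi> y) x
        \<longrightarrow> 0 \<le> F (Hs x) x)"

end

theory Submission
  imports Defs
begin

text \<open>
  Let \<open>\<phi>\<close> touch \<open>u\<close> at \<open>x\<close> and let \<open>S\<close> be the symmetric part of \<open>D\<^sup>2\<phi>(x)\<close>. Every
  \<open>B \<in> S\<^sub>1\<close> is symmetric, so \<open>B : D\<^sup>2\<phi>(x) = tr (B S)\<close> and only \<open>S\<close> enters the Bellman
  operator. By Taylor's formula the quadratics with Hessian \<open>S \<plusminus> \<epsilon>I\<close> touch \<open>u\<close> at \<open>x\<close>
  as well; they are convex whenever \<open>S \<plusminus> \<epsilon>I \<ge> 0\<close>, hence admissible, so the Monge--Ampere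
  inequality holds for \<open>det (S \<plusminus> \<epsilon>I)\<close> and, letting \<open>\<epsilon> \<rightarrow> 0\<close>, for \<open>det S\<close>.

  For a subsolution, convexity of \<open>u\<close> makes \<open>S \<ge> 0\<close>, and \<open>det S \<ge> (f/d)\<^sup>d\<close> combined with the
  AM--GM inequality \<open>tr (B S) \<ge> d (det B det S)\<^bsup>1/d\<^esup>\<close> gives \<open>H \<le> 0\<close>. For a supersolution,
  either \<open>S\<close> is not positive definite and a rank-one \<open>B = v v\<^sup>T\<close> with \<open>v\<^sup>T S v \<le> 0\<close> has
  value \<open>\<ge> 0\<close> (its determinant vanishes as \<open>d \<ge> 2\<close>), or \<open>det S \<le> (f/d)\<^sup>d\<close> and
  \<open>B = S\<^sup>-\<^sup>1 / tr S\<^sup>-\<^sup>1\<close> has value \<open>\<ge> 0\<close>.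
\<close>

section \<open>Spectral theorem for real symmetric matrices\<close>

lemma linear_coeff_zero_if_quadratic_nonpos:
  fixes a b :: real
  assumes "\<And>t. a * t + b * t\<^sup>2 \<le> 0"
  shows "a = 0"
proof -
  define c where "c = \<bar>b\<bar> + 1"
  have c: "c > 0" "c + b > 0" unfolding c_def by auto
  have "a * (a / c) + b * (a / c)\<^sup>2 = a\<^sup>2 * (c + b) / c\<^sup>2"
    using c by (simp add: field_simps power2_eq_square)
  then have "a\<^sup>2 * (c + b) \<le> 0"
    using assms[of "a / c"] c by (simp add: divide_le_0_iff)
  then show ?thesis using c by (simp add: mult_le_0_iff)
qed

lemma symmetric_matrix_inner_commute:
  fixes A :: "real^'n^'n"
  assumes "transpose A = A"
  shows "x \<bullet> (A *v y) = (A *v x) \<bullet> y"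
  by (metis assms dot_lmul_matrix transpose_matrix_vector)

lemma quadratic_form_normalize:
  fixes A :: "real^'n^'n"
  shows "(x /\<^sub>R norm x) \<bullet> (A *v (x /\<^sub>R norm x)) = (x \<bullet> (A *v x)) / (norm x)\<^sup>2"
  by (simp add: matrix_vector_mult_scaleR power2_eq_square divide_inverse mult_ac)

lemma continuous_on_quadratic_form: "continuous_on S (\<lambda>x. x \<bullet> ((A::real^'n^'n) *v x))"
  by (intro continuous_intros continuous_on_id linear_continuous_on matrix_vector_mul_linear)

lemma symmetric_matrix_rayleigh_max_eigenvector:
  fixes A :: "real^'n^'n"
  assumes sym: "transpose A = A" and V: "subspace V" and inv: "\<And>x. x \<in> V \<Longrightarrow> A *v x \<in> V"
    and v: "v \<in> V" "v \<bullet> v = 1" and max: "\<And>y. y \<in> V \<Longrightarrow> y \<bullet> (A *v y) \<le> (v \<bullet> (A *v v)) * (y \<bullet> y)"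
  shows "A *v v = (v \<bullet> (A *v v)) *\<^sub>R v"
proof -
  define l where "l = v \<bullet> (A *v v)"
  have orth: "w \<bullet> (A *v v) = 0" if w: "w \<in> V" "w \<bullet> v = 0" for w
  proof -
    \<comment> \<open>maximality of \<open>v\<close> tested at \<open>v + t w\<close> gives a quadratic in \<open>t\<close> that is never positive\<close>
    have "2 * (w \<bullet> (A *v v)) = 0"
    proof (rule linear_coeff_zero_if_quadratic_nonpos)
      fix t :: real
      have "v + t *\<^sub>R w \<in> V" using w v V by (simp add: subspace_add subspace_scale)
      moreover have "v \<bullet> (A *v w) = w \<bullet> (A *v v)"
        using symmetric_matrix_inner_commute[OF sym, of v w] by (simp add: inner_commute)
      moreover have "v \<bullet> w = 0" using w by (simp add: inner_commute)
      moreover note max[OF \<open>v + t *\<^sub>R w \<in> V\<close>]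
      ultimately show "(2 * (w \<bullet> (A *v v))) * t + (w \<bullet> (A *v w) - l * (w \<bullet> w)) * t\<^sup>2 \<le> 0"
        using v w by (simp add: algebra_simps inner_add_left inner_add_right power2_eq_square l_def)
    qed
    then show ?thesis by simp
  qed
  define r where "r = A *v v - l *\<^sub>R v"
  have "r \<in> V" unfolding r_def using inv v V by (simp add: subspace_diff subspace_scale)
  moreover have rv: "r \<bullet> v = 0"
    unfolding r_def using v by (simp add: inner_diff_left inner_diff_right l_def inner_commute)
  ultimately have "r \<bullet> (A *v v) = 0" by (rule orth)
  then have "r \<bullet> r = 0" using rv unfolding r_def by (simp add: inner_diff_right)
  then show ?thesis unfolding r_def l_def by simp
qed

lemma symmetric_invariant_subspace_unit_eigenvector:
  fixes A :: "real^'n^'n"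
  assumes sym: "transpose A = A" and V: "subspace V" "V \<noteq> {0}"
    and inv: "\<And>x. x \<in> V \<Longrightarrow> A *v x \<in> V"
  obtains v l where "v \<in> V" "norm v = 1" "A *v v = l *\<^sub>R v"
proof -
  obtain z where z: "z \<in> V" "z \<noteq> 0" using V subspace_0 by blast
  let ?K = "V \<inter> sphere 0 1"
  have "compact ?K" by (intro closed_Int_compact closed_subspace V compact_sphere)
  moreover have "z /\<^sub>R norm z \<in> ?K" using z V by (simp add: subspace_scale)
  then have "?K \<noteq> {}" by blast
  ultimately obtain v where v: "v \<in> ?K" and vmax: "\<And>y. y \<in> ?K \<Longrightarrow> y \<bullet> (A *v y) \<le> v \<bullet> (A *v v)"
    using continuous_attains_sup[OF _ _ continuous_on_quadratic_form, of ?K A] by blast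
  have vV: "v \<in> V" and vv: "v \<bullet> v = 1" using v by (auto simp: norm_eq_1)
  have "y \<bullet> (A *v y) \<le> (v \<bullet> (A *v v)) * (y \<bullet> y)" if y: "y \<in> V" for y
  proof (cases "y = 0")
    case False
    then have "y /\<^sub>R norm y \<in> ?K" using y V by (simp add: subspace_scale)
    from vmax[OF this] have "(y \<bullet> (A *v y)) / (norm y)\<^sup>2 \<le> v \<bullet> (A *v v)"
      by (simp only: quadratic_form_normalize)
    then show ?thesis
      using False by (simp add: divide_le_eq power2_norm_eq_inner mult.commute)
  qed simp
  then have "A *v v = (v \<bullet> (A *v v)) *\<^sub>R v"
    using symmetric_matrix_rayleigh_max_eigenvector[OF sym V(1) inv vV vv] by blast
  with that vV v show ?thesis by auto
qed

lemma symmetric_invariant_subspace_orthonormal_eigenbasis: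
  fixes A :: "real^'n^'n"
  assumes sym: "transpose A = A"
  shows "subspace V \<Longrightarrow> dim V = k \<Longrightarrow> (\<And>x. x \<in> V \<Longrightarrow> A *v x \<in> V) \<Longrightarrow>
    \<exists>B. B \<subseteq> V \<and> finite B \<and> card B = k \<and> pairwise orthogonal B
      \<and> (\<forall>b\<in>B. norm b = 1 \<and> (\<exists>l. A *v b = l *\<^sub>R b))"
proof (induction k arbitrary: V)
  case 0
  show ?case by (intro exI[of _ "{}"]) simp
next
  case (Suc k)
  have "V \<noteq> {0}" using Suc.prems(2) by auto
  then obtain v l where v: "v \<in> V" "norm v = 1" "A *v v = l *\<^sub>R v"
    using symmetric_invariant_subspace_unit_eigenvector[OF sym Suc.prems(1)] Suc.prems(3) by metis
  have "v \<noteq> 0" using v(2) by auto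
  define V' where "V' = {y \<in> V. \<forall>x\<in>span {v}. orthogonal x y}"
  have V'_iff: "y \<in> V' \<longleftrightarrow> y \<in> V \<and> v \<bullet> y = 0" for y
    unfolding V'_def span_singleton orthogonal_def by auto
  have "subspace V'"
    using Suc.prems(1) by (auto simp: subspace_def V'_iff inner_add_right)
  moreover have "dim V' = k"
    using dim_subspace_orthogonal_to_vectors[of "span {v}" V] Suc.prems(1,2) v(1) \<open>v \<noteq> 0\<close>
    by (simp add: V'_def span_minimal subspace_span dim_singleton)
  moreover have "A *v y \<in> V'" if "y \<in> V'" for y
    using that Suc.prems(3) v symmetric_matrix_inner_commute[OF sym, of v y] by (auto simp: V'_iff)
  ultimately obtain B where B: "B \<subseteq> V'" "finite B" "card B = k" "pairwise orthogonal B"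
      "\<forall>b\<in>B. norm b = 1 \<and> (\<exists>l. A *v b = l *\<^sub>R b)"
    using Suc.IH[of V'] by auto
  have "v \<notin> V'" using v by (auto simp: V'_iff norm_eq_1)
  then have "v \<notin> B" using B(1) by blast
  show ?case
  proof (intro exI[of _ "insert v B"] conjI)
    show "insert v B \<subseteq> V" using B(1) v(1) by (auto simp: V'_iff)
    show "pairwise orthogonal (insert v B)"
      using B(1,4) by (auto simp: pairwise_insert V'_iff orthogonal_def inner_commute)
  qed (use B v \<open>v \<notin> B\<close> in auto)
qed

lemma congruence_entry:
  fixes P A Q :: "real^'n^'n"
  shows "(transpose P ** A ** Q) $ i $ j = column i P \<bullet> (A *v column j Q)"
proof -
  have "(transpose P ** A ** Q) $ i $ j = (\<Sum>k\<in>UNIV. \<Sum>m\<in>UNIV. P$m$i * A$m$k * Q$k$j)"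
    by (simp add: matrix_matrix_mult_def transpose_def sum_distrib_right)
  also have "\<dots> = (\<Sum>m\<in>UNIV. \<Sum>k\<in>UNIV. P$m$i * A$m$k * Q$k$j)"
    by (rule sum.swap)
  also have "\<dots> = column i P \<bullet> (A *v column j Q)"
    by (simp add: matrix_vector_mult_def inner_vec_def column_def sum_distrib_left mult.assoc)
  finally show ?thesis .
qed

lemma symmetric_matrix_orthogonally_diagonalizable:
  fixes A :: "real^'n^'n"
  assumes sym: "transpose A = A"
  obtains Q where "orthogonal_matrix Q" "\<And>i j. i \<noteq> j \<Longrightarrow> (transpose Q ** A ** Q) $ i $ j = 0"
proof -
  obtain B where B: "finite B" "card B = CARD('n)" "pairwise orthogonal B"
      "\<forall>b\<in>B. norm b = 1 \<and> (\<exists>l. A *v b = l *\<^sub>R b)"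
    using symmetric_invariant_subspace_orthonormal_eigenbasis[OF sym subspace_UNIV, of "CARD('n)"]
    by (auto simp: dim_UNIV)
  obtain b where b: "bij_betw b (UNIV::'n set) B"
    using finite_same_card_bij[of "UNIV :: 'n set" B] B(1,2) by auto
  then have bB: "b i \<in> B" and b_inj: "i \<noteq> j \<Longrightarrow> b i \<noteq> b j" for i j
    by (auto simp: bij_betw_def inj_on_def)
  have b_orth: "i \<noteq> j \<Longrightarrow> b i \<bullet> b j = 0" for i j
    using B(3) bB b_inj by (auto simp: pairwise_def orthogonal_def)
  define Q where "Q = (\<chi> i j. b j $ i)"
  have col: "column j Q = b j" for j by (simp add: Q_def column_def vec_eq_iff)
  have "transpose Q ** Q = mat 1"
    using B(4) bB b_orth
    by (auto simp: matrix_mult_transpose_dot_column col vec_eq_iff mat_def norm_eq_1)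
  then have "orthogonal_matrix Q" by (simp add: orthogonal_matrix)
  moreover have "(transpose Q ** A ** Q) $ i $ j = 0" if "i \<noteq> j" for i j
  proof -
    obtain l where "A *v b j = l *\<^sub>R b j" using B(4) bB by blast
    then show ?thesis using b_orth[OF that] by (simp add: congruence_entry col)
  qed
  ultimately show ?thesis using that by blast
qed

lemma trace_orthogonal_congruence:
  fixes A Q :: "real^'n^'n"
  assumes "orthogonal_matrix Q"
  shows "trace (transpose Q ** A ** Q) = trace A"
proof -
  have "trace (transpose Q ** A ** Q) = trace (Q ** (transpose Q ** A))"
    by (rule trace_mul_sym)
  then show ?thesis
    using assms by (simp add: orthogonal_matrix_def matrix_mul_assoc matrix_mul_lid)
qed

lemma det_orthogonal_congruence:
  fixes A Q :: "real^'n^'n"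
  assumes "orthogonal_matrix Q"
  shows "det (transpose Q ** A ** Q) = det A"
proof -
  have "det (transpose Q ** A ** Q) = det (transpose Q ** Q) * det A"
    by (simp add: det_mul)
  then show ?thesis using assms by (simp add: orthogonal_matrix)
qed

lemma symmetric_matrix_spectral_form:
  fixes A :: "real^'n^'n"
  assumes "transpose A = A"
  shows "\<exists>b :: 'n \<Rightarrow> real^'n. (\<forall>k. norm (b k) = 1)
    \<and> det A = (\<Prod>k\<in>UNIV. b k \<bullet> (A *v b k)) \<and> trace A = (\<Sum>k\<in>UNIV. b k \<bullet> (A *v b k))"
proof -
  obtain Q where Q: "orthogonal_matrix Q"
    and diag: "\<And>i j. i \<noteq> j \<Longrightarrow> (transpose Q ** A ** Q) $ i $ j = 0"
    using symmetric_matrix_orthogonally_diagonalizable[OF assms] by blast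
  have "column k Q \<bullet> column k Q = 1" for k
  proof -
    have "(transpose Q ** Q) $ k $ k = 1" using Q by (simp add: orthogonal_matrix mat_def)
    then show ?thesis by (simp add: matrix_mult_transpose_dot_column)
  qed
  moreover have "det A = (\<Prod>k\<in>UNIV. column k Q \<bullet> (A *v column k Q))"
    using det_orthogonal_congruence[OF Q, of A] det_diagonal[OF diag] by (simp add: congruence_entry)
  moreover have "trace A = (\<Sum>k\<in>UNIV. column k Q \<bullet> (A *v column k Q))"
    using trace_orthogonal_congruence[OF Q, of A] by (simp add: trace_def congruence_entry)
  ultimately show ?thesis by (intro exI[of _ "\<lambda>k. column k Q"]) (simp add: norm_eq_1)
qed

section \<open>Positive semidefinite and positive definite matrices\<close>

definition pd_mat :: "real^'n^'n \<Rightarrow> bool" where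
  "pd_mat A \<longleftrightarrow> sym_mat A \<and> (\<forall>x. x \<noteq> 0 \<longrightarrow> 0 < x \<bullet> (A *v x))"

lemma psd_mat_symmetric: "psd_mat A \<Longrightarrow> transpose A = A"
  by (simp add: psd_mat_def sym_mat_def)

lemma pd_mat_symmetric: "pd_mat A \<Longrightarrow> transpose A = A"
  by (simp add: pd_mat_def sym_mat_def)

lemma psd_det_nonneg:
  fixes A :: "real^'n^'n"
  assumes "psd_mat A"
  shows "0 \<le> det A"
proof -
  obtain b :: "'n \<Rightarrow> real^'n" where det: "det A = (\<Prod>k\<in>UNIV. b k \<bullet> (A *v b k))"
    using symmetric_matrix_spectral_form[OF psd_mat_symmetric[OF assms]] by blast
  have "0 \<le> b k \<bullet> (A *v b k)" for k using assms by (simp add: psd_mat_def)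
  then show ?thesis unfolding det by (intro prod_nonneg)
qed

lemma pd_det_pos:
  fixes A :: "real^'n^'n"
  assumes "pd_mat A"
  shows "0 < det A"
proof -
  obtain b :: "'n \<Rightarrow> real^'n" where b: "\<And>k. norm (b k) = 1" and det: "det A = (\<Prod>k\<in>UNIV. b k \<bullet> (A *v b k))"
    using symmetric_matrix_spectral_form[OF pd_mat_symmetric[OF assms]] by blast
  have "b k \<noteq> 0" for k using b[of k] by auto
  then have "0 < b k \<bullet> (A *v b k)" for k using assms by (simp add: pd_mat_def)
  then show ?thesis unfolding det by (intro prod_pos)
qed

lemma psd_root_det_le_trace:
  fixes A :: "real^'n^'n"
  assumes "psd_mat A"
  shows "real CARD('n) * root CARD('n) (det A) \<le> trace A"
proof -
  obtain b :: "'n \<Rightarrow> real^'n" where det: "det A = (\<Prod>k\<in>UNIV. b k \<bullet> (A *v b k))"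
    and tr: "trace A = (\<Sum>k\<in>UNIV. b k \<bullet> (A *v b k))"
    using symmetric_matrix_spectral_form[OF psd_mat_symmetric[OF assms]] by blast
  have nonneg: "0 \<le> b k \<bullet> (A *v b k)" for k using assms by (simp add: psd_mat_def)
  have "(\<Prod>k\<in>UNIV. b k \<bullet> (A *v b k)) powr (1 / real CARD('n))
      \<le> (\<Sum>k\<in>UNIV. b k \<bullet> (A *v b k) / real CARD('n))"
    by (rule arith_geom_mean) (simp_all add: nonneg)
  moreover have "root CARD('n) (det A) = det A powr (1 / real CARD('n))"
    using psd_det_nonneg[OF assms] by (cases "det A = 0") (simp_all add: root_powr_inverse)
  ultimately have "root CARD('n) (det A) \<le> trace A / real CARD('n)"
    by (simp add: det tr sum_divide_distrib)
  then show ?thesis by (simp add: field_simps)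
qed

lemma psd_symmetric_sqrt:
  fixes S :: "real^'n^'n"
  assumes "psd_mat S"
  obtains R where "transpose R = R" "R ** R = S"
proof -
  obtain Q where Q: "orthogonal_matrix Q"
    and diag: "\<And>i j. i \<noteq> j \<Longrightarrow> (transpose Q ** S ** Q) $ i $ j = 0"
    using symmetric_matrix_orthogonally_diagonalizable[OF psd_mat_symmetric[OF assms]] by blast
  define D where "D = transpose Q ** S ** Q"
  have D_nonneg: "0 \<le> D $ k $ k" for k
    using assms by (simp add: D_def congruence_entry psd_mat_def)
  define E :: "real^'n^'n" where "E = (\<chi> i j. if i = j then sqrt (D $ i $ i) else 0)"
  have EE: "E ** E = D"
  proof -
    have "(E ** E) $ i $ j = D $ i $ j" for i j
    proof -
      have "(E ** E) $ i $ j = (\<Sum>k\<in>UNIV. E $ i $ k * E $ k $ j)"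
        by (simp add: matrix_matrix_mult_def)
      also have "\<dots> = (\<Sum>k\<in>{i}. E $ i $ k * E $ k $ j)"
        by (rule sum.mono_neutral_right) (auto simp: E_def)
      finally show ?thesis using D_nonneg[of i] diag[of i j] by (auto simp: E_def D_def)
    qed
    then show ?thesis by (simp add: vec_eq_iff)
  qed
  have "Q ** D ** transpose Q = (Q ** transpose Q) ** S ** (Q ** transpose Q)"
    by (simp add: D_def matrix_mul_assoc)
  then have QDQ: "Q ** D ** transpose Q = S"
    using Q by (simp add: orthogonal_matrix_def matrix_mul_lid matrix_mul_rid)
  define R where "R = Q ** E ** transpose Q"
  have "transpose E = E" by (simp add: E_def transpose_def vec_eq_iff)
  then have symR: "transpose R = R" by (simp add: R_def matrix_transpose_mul matrix_mul_assoc)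
  have "R ** R = Q ** (E ** (transpose Q ** Q) ** E) ** transpose Q"
    by (simp add: R_def matrix_mul_assoc)
  also have "\<dots> = Q ** (E ** E) ** transpose Q"
    using Q by (simp add: orthogonal_matrix matrix_mul_rid)
  also have "\<dots> = S" unfolding EE by (rule QDQ)
  finally show ?thesis by (rule that[OF symR])
qed

lemma psd_root_det_mult_le_trace_mult:
  fixes B S :: "real^'n^'n"
  assumes B: "psd_mat B" and S: "psd_mat S"
  shows "real CARD('n) * root CARD('n) (det B * det S) \<le> trace (B ** S)"
proof -
  obtain R where R: "transpose R = R" "R ** R = S" using psd_symmetric_sqrt[OF S] by blast
  define P where "P = R ** B ** R"
  have "transpose P = P" using R(1) psd_mat_symmetric[OF B] by (simp add: P_def matrix_transpose_mul matrix_mul_assoc)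
  moreover have "x \<bullet> (P *v x) = (R *v x) \<bullet> (B *v (R *v x))" for x
    using symmetric_matrix_inner_commute[OF R(1)] by (simp add: P_def matrix_vector_mul_assoc[symmetric])
  ultimately have "psd_mat P" using B by (simp add: psd_mat_def sym_mat_def)
  moreover have "trace P = trace (B ** S)"
    using trace_mul_sym[of R "B ** R"] R(2) by (simp add: P_def matrix_mul_assoc[symmetric])
  moreover have "det P = det B * det S"
    using R(2) det_mul[of R R] by (simp add: P_def det_mul)
  ultimately show ?thesis using psd_root_det_le_trace[of P] by simp
qed

lemma psd_trace_mult_nonneg:
  fixes B S :: "real^'n^'n"
  assumes "psd_mat B" "psd_mat S"
  shows "0 \<le> trace (B ** S)"
proof -
  have "0 \<le> real CARD('n) * root CARD('n) (det B * det S)"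
    using psd_det_nonneg[OF assms(1)] psd_det_nonneg[OF assms(2)] by simp
  then show ?thesis using psd_root_det_mult_le_trace_mult[OF assms] by linarith
qed

lemma quadratic_form_sphere_min:
  fixes A :: "real^'n^'n"
  shows "\<exists>w. norm w = 1 \<and> (\<forall>v. (w \<bullet> (A *v w)) * (v \<bullet> v) \<le> v \<bullet> (A *v v))"
proof -
  have "sphere (0::real^'n) 1 \<noteq> {}" by simp
  from continuous_attains_inf[OF compact_sphere this continuous_on_quadratic_form]
  obtain w where w: "w \<in> sphere 0 1"
    and wmin: "\<And>y. y \<in> sphere 0 1 \<Longrightarrow> w \<bullet> (A *v w) \<le> y \<bullet> (A *v y)"
    by blast
  have "(w \<bullet> (A *v w)) * (v \<bullet> v) \<le> v \<bullet> (A *v v)" for v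
  proof (cases "v = 0")
    case False
    then have "v /\<^sub>R norm v \<in> sphere 0 1" by simp
    from wmin[OF this] have "w \<bullet> (A *v w) \<le> (v \<bullet> (A *v v)) / (norm v)\<^sup>2"
      by (simp only: quadratic_form_normalize)
    moreover have "0 < (norm v)\<^sup>2" using False by simp
    ultimately show ?thesis by (simp add: pos_le_divide_eq power2_norm_eq_inner)
  qed simp
  moreover have "norm w = 1" using w by simp
  ultimately show ?thesis by blast
qed

lemma pd_quadratic_form_ge:
  fixes A :: "real^'n^'n"
  assumes "pd_mat A"
  shows "\<exists>l>0. \<forall>v. l * (v \<bullet> v) \<le> v \<bullet> (A *v v)"
proof -
  obtain w where "norm w = 1" "\<forall>v. (w \<bullet> (A *v w)) * (v \<bullet> v) \<le> v \<bullet> (A *v v)"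
    using quadratic_form_sphere_min[of A] by blast
  moreover from \<open>norm w = 1\<close> have "w \<noteq> 0" by auto
  then have "0 < w \<bullet> (A *v w)" using assms by (simp add: pd_mat_def)
  ultimately show ?thesis by blast
qed

lemma pd_mat_inverse:
  fixes A :: "real^'n^'n"
  assumes pd: "pd_mat A"
  obtains A' where "A' ** A = mat 1" "pd_mat A'"
proof -
  have "A *v x = 0 \<Longrightarrow> x = 0" for x using pd by (force simp: pd_mat_def)
  then obtain A' where left: "A' ** A = mat 1" using matrix_left_invertible_ker by blast
  then have right: "A ** A' = mat 1" using matrix_left_right_inverse by blast
  have "transpose A' ** A = mat 1"
    using right pd_mat_symmetric[OF pd] by (metis matrix_transpose_mul transpose_mat)
  then have "transpose A' = A'" by (metis right matrix_mul_assoc matrix_mul_lid matrix_mul_rid)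
  moreover have "0 < v \<bullet> (A' *v v)" if "v \<noteq> 0" for v
  proof -
    have AA'v: "A *v (A' *v v) = v" using right by (simp add: matrix_vector_mul_assoc)
    then have "A' *v v \<noteq> 0" using that by auto
    then have "0 < (A' *v v) \<bullet> (A *v (A' *v v))" using pd by (simp add: pd_mat_def)
    then show ?thesis by (simp add: AA'v inner_commute)
  qed
  ultimately show ?thesis using that left by (simp add: pd_mat_def sym_mat_def)
qed

lemma pd_trace_pos:
  fixes A :: "real^'n^'n"
  assumes "pd_mat A"
  shows "0 < trace A"
  unfolding trace_def
proof (rule sum_pos)
  fix k :: 'n
  have "axis k (1::real) \<noteq> 0" by (simp add: axis_eq_0_iff)
  then have "0 < axis k 1 \<bullet> (A *v axis k 1)" using assms by (simp add: pd_mat_def)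
  then show "0 < A $ k $ k" by (simp add: inner_axis' matrix_vector_mul_component inner_axis)
qed auto

lemma trace_transpose: "trace (transpose (A::real^'n^'n)) = trace A"
  by (simp add: trace_def transpose_def)

lemma trace_scaleR: "trace (c *\<^sub>R (A::real^'n^'n)) = c * trace A"
  by (simp add: trace_def sum_distrib_left)

lemma det_scaleR:
  fixes A :: "real^'n^'n"
  shows "det (c *\<^sub>R A) = c ^ CARD('n) * det A"
  by (simp add: det_def prod.distrib sum_distrib_left mult_ac)

lemma quadratic_form_add_scaleR_id:
  fixes A :: "real^'n^'n"
  shows "v \<bullet> ((A + c *\<^sub>R mat 1) *v v) = v \<bullet> (A *v v) + c * (v \<bullet> v)"
  by (simp add: matrix_vector_mult_add_rdistrib scaleR_matrix_vector_assoc[symmetric] inner_add_right)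

lemma transpose_add_scaleR_id:
  fixes A :: "real^'n^'n"
  shows "transpose A = A \<Longrightarrow> transpose (A + c *\<^sub>R mat 1) = A + c *\<^sub>R mat 1"
  by (simp add: transpose_def vec_eq_iff mat_def)

lemma psd_mat_add_scaleR_id:
  fixes S :: "real^'n^'n"
  assumes "transpose S = S" "\<And>v. - c * (v \<bullet> v) \<le> v \<bullet> (S *v v)"
  shows "psd_mat (S + c *\<^sub>R mat 1)"
proof -
  have "0 \<le> v \<bullet> ((S + c *\<^sub>R mat 1) *v v)" for v
    using assms(2)[of v] by (simp add: quadratic_form_add_scaleR_id)
  then show ?thesis using assms(1) by (simp add: psd_mat_def sym_mat_def transpose_add_scaleR_id)
qed

lemma norm_matrix_vector_mult_le:
  fixes M :: "real^'n^'m"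
  shows "norm (M *v h) \<le> real CARD('m) * norm M * norm h"
proof -
  have "\<bar>(M *v h) $ i\<bar> \<le> norm M * norm h" for i
  proof -
    have "\<bar>(M *v h) $ i\<bar> \<le> norm (M $ i) * norm h"
      by (simp add: matrix_vector_mul_component Cauchy_Schwarz_ineq2)
    also have "\<dots> \<le> norm M * norm h" by (simp add: Finite_Cartesian_Product.norm_nth_le mult_right_mono)
    finally show ?thesis .
  qed
  then have "(\<Sum>i\<in>UNIV. \<bar>(M *v h) $ i\<bar>) \<le> (\<Sum>i\<in>(UNIV::'m set). norm M * norm h)"
    by (intro sum_mono)
  with norm_le_l1_cart[of "M *v h"] show ?thesis by simp
qed

lemma quadratic_form_abs_le:
  fixes M :: "real^'n^'n"
  shows "\<bar>h \<bullet> (M *v h)\<bar> \<le> real CARD('n) * norm M * (norm h)\<^sup>2"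
proof -
  have "\<bar>h \<bullet> (M *v h)\<bar> \<le> norm h * norm (M *v h)" by (rule Cauchy_Schwarz_ineq2)
  also have "\<dots> \<le> norm h * (real CARD('n) * norm M * norm h)"
    by (simp add: mult_left_mono norm_matrix_vector_mult_le)
  finally show ?thesis by (simp add: power2_eq_square mult_ac)
qed

lemma tendsto_det_add_scaleR:
  fixes S N :: "real^'n^'n"
  shows "((\<lambda>e. det (S + e *\<^sub>R N)) \<longlongrightarrow> det S) (at_right 0)"
proof -
  have "continuous_on UNIV (\<lambda>e::real. det (S + e *\<^sub>R N))"
    unfolding det_def by (simp; intro continuous_intros)
  then have "isCont (\<lambda>e::real. det (S + e *\<^sub>R N)) 0"
    by (simp add: continuous_on_eq_continuous_at)
  then have "((\<lambda>e. det (S + e *\<^sub>R N)) \<longlongrightarrow> det S) (at 0)" by (simp add: isCont_def)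
  then show ?thesis by (rule tendsto_within_subset) simp
qed

lemma det_ge_if_det_add_scaleR_ge:
  fixes S N :: "real^'n^'n"
  assumes "r > 0" "\<And>e. 0 < e \<Longrightarrow> e < r \<Longrightarrow> c \<le> det (S + e *\<^sub>R N)"
  shows "c \<le> det S"
proof (rule tendsto_lowerbound[OF tendsto_det_add_scaleR])
  show "\<forall>\<^sub>F e in at_right 0. c \<le> det (S + e *\<^sub>R N)"
    using eventually_at_right_real[OF assms(1)] by (rule eventually_mono) (use assms(2) in auto)
qed simp

lemma det_le_if_det_add_scaleR_le:
  fixes S N :: "real^'n^'n"
  assumes "r > 0" "\<And>e. 0 < e \<Longrightarrow> e < r \<Longrightarrow> det (S + e *\<^sub>R N) \<le> c"
  shows "det S \<le> c"
proof (rule tendsto_upperbound[OF tendsto_det_add_scaleR])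
  show "\<forall>\<^sub>F e in at_right 0. det (S + e *\<^sub>R N) \<le> c"
    using eventually_at_right_real[OF assms(1)] by (rule eventually_mono) (use assms(2) in auto)
qed simp

section \<open>The Bellman operator\<close>

definition symm_part :: "real^'n^'n \<Rightarrow> real^'n^'n" where
  "symm_part A = (1/2) *\<^sub>R (A + transpose A)"

lemma symm_part_symmetric: "transpose (symm_part A) = symm_part A"
  by (simp add: symm_part_def transpose_def vec_eq_iff add.commute)

lemma quadratic_form_symm_part: "x \<bullet> (symm_part A *v x) = x \<bullet> (A *v x)"
proof -
  have "x \<bullet> (transpose A *v x) = x \<bullet> (A *v x)"
    by (metis dot_lmul_matrix inner_commute transpose_matrix_vector)
  then show ?thesis unfolding symm_part_def
    by (simp add: scaleR_matrix_vector_assoc[symmetric] matrix_vector_mult_add_rdistrib inner_add_right)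
qed

lemma trace_mult_symm_part:
  fixes A B :: "real^'n^'n"
  assumes "transpose B = B"
  shows "trace (B ** symm_part A) = trace (B ** A)"
proof -
  have "trace (B ** transpose A) = trace (transpose (A ** B))"
    using assms by (simp add: matrix_transpose_mul)
  also have "\<dots> = trace (A ** B)" by (rule trace_transpose)
  also have "\<dots> = trace (B ** A)" by (rule trace_mul_sym)
  finally have "trace (B ** transpose A) = trace (B ** A)" .
  moreover have "B ** symm_part A = (1/2) *\<^sub>R (B ** A + B ** transpose A)"
    unfolding symm_part_def matrix_scalar_ac scalar_matrix_assoc[symmetric] matrix_add_ldistrib
    by (simp add: scaleR_add_right)
  ultimately show ?thesis by (simp add: trace_scaleR trace_add)
qed

lemma frob_symmetric: "transpose B = B \<Longrightarrow> frob B A = trace (B ** A)"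
  by (simp add: frob_def trace_mat_def trace_def)

lemma S1_iff: "B \<in> S1 \<longleftrightarrow> psd_mat B \<and> trace B = 1"
  by (simp add: S1_def trace_mat_def trace_def)

lemma bellman_symm_part: "bellman A f = bellman (symm_part A) f"
  unfolding bellman_def
  by (rule SUP_cong) (auto simp: S1_iff frob_symmetric trace_mult_symm_part psd_mat_symmetric)

definition outer_mat :: "real^'n \<Rightarrow> real^'n^'n" where
  "outer_mat v = (\<chi> i j. v $ i * v $ j)"

lemma outer_mat_mult_vec: "outer_mat v *v x = (v \<bullet> x) *\<^sub>R v"
  by (simp add: outer_mat_def matrix_vector_mult_def inner_vec_def vec_eq_iff sum_distrib_left mult_ac)

lemma trace_outer_mat_mult: "trace (outer_mat v ** A) = v \<bullet> (A *v v)"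
proof -
  have "trace (outer_mat v ** A) = trace (A ** outer_mat v)" by (rule trace_mul_sym)
  then show ?thesis
    by (simp add: trace_def outer_mat_def matrix_matrix_mult_def matrix_vector_mult_def inner_vec_def
        sum_distrib_left mult_ac)
qed

lemma outer_mat_S1:
  assumes "norm v = 1"
  shows "outer_mat v \<in> S1"
proof -
  have "transpose (outer_mat v) = outer_mat v"
    by (simp add: outer_mat_def transpose_def vec_eq_iff mult.commute)
  moreover have "x \<bullet> (outer_mat v *v x) = (v \<bullet> x)\<^sup>2" for x
    by (simp add: outer_mat_mult_vec power2_eq_square inner_commute)
  moreover have "trace (outer_mat v) = v \<bullet> v"
    by (simp add: trace_def outer_mat_def inner_vec_def)
  ultimately show ?thesis using assms by (simp add: S1_iff psd_mat_def sym_mat_def norm_eq_1)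
qed

lemma det_outer_mat:
  assumes "CARD('n) \<ge> 2"
  shows "det (outer_mat (v :: real^'n)) = 0"
proof -
  have "\<exists>i j :: 'n. i \<noteq> j"
  proof (rule ccontr)
    assume "\<not> ?thesis"
    then have "(UNIV :: 'n set) = {undefined}" by blast
    then have "CARD('n) = card {undefined :: 'n}" by (rule arg_cong)
    then show False using assms by simp
  qed
  then obtain i j :: 'n where ij: "i \<noteq> j" by blast
  define w :: "real^'n" where
    "w = (if v $ i = 0 \<and> v $ j = 0 then axis i 1 else v $ j *\<^sub>R axis i 1 - v $ i *\<^sub>R axis j 1)"
  have "outer_mat v *v w = 0"
    by (auto simp: outer_mat_mult_vec w_def inner_diff_right inner_axis mult.commute)
  moreover have "w \<noteq> 0"
    using ij by (auto simp: w_def vec_eq_iff axis_def split: if_splits)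
  ultimately have "\<not> invertible (outer_mat v)"
    using matrix_left_invertible_ker by (auto simp: invertible_def)
  then show ?thesis by (simp add: invertible_det_nz)
qed

lemma S1_nonempty: "(S1 :: (real^'n^'n) set) \<noteq> {}"
  using outer_mat_S1[of "axis (undefined :: 'n) 1"] by (auto simp: norm_axis_1)

lemma root_le_of_power_le:
  assumes "0 < n" "0 \<le> a" "a ^ n \<le> x"
  shows "a \<le> root n x"
  using real_root_le_iff[of n "a ^ n" x] real_root_power_cancel[of n a] assms by simp

lemma root_ge_of_power_ge:
  assumes "0 < n" "0 \<le> a" "x \<le> a ^ n"
  shows "root n x \<le> a"
  using real_root_le_iff[of n x "a ^ n"] real_root_power_cancel[of n a] assms by simp

lemma bellman_nonpos:
  fixes S :: "real^'n^'n"
  assumes S: "psd_mat S" and f: "0 \<le> f" and MA: "monge_ampere S f \<le> 0"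
  shows "bellman S f \<le> 0"
  unfolding bellman_def
proof (rule cSUP_least[OF S1_nonempty])
  fix B :: "real^'n^'n"
  assume "B \<in> S1"
  then have B: "psd_mat B" by (simp add: S1_iff)
  let ?d = "CARD('n)"
  have "f / ?d \<le> root ?d (det S)"
    using MA f by (intro root_le_of_power_le) (simp_all add: monge_ampere_def)
  then have "f \<le> ?d * root ?d (det S)" by (simp add: divide_le_eq mult.commute)
  moreover have "0 \<le> root ?d (det B)" using psd_det_nonneg[OF B] by simp
  ultimately have "f * root ?d (det B) \<le> ?d * root ?d (det S) * root ?d (det B)"
    by (rule mult_right_mono)
  also have "\<dots> = ?d * root ?d (det B * det S)" by (simp add: real_root_mult)
  also have "\<dots> \<le> trace (B ** S)" by (rule psd_root_det_mult_le_trace_mult[OF B S])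
  also have "\<dots> = frob B S" using frob_symmetric[OF psd_mat_symmetric[OF B]] by simp
  finally show "- frob B S + f * root ?d (det B) \<le> 0" by simp
qed

lemma bellman_bdd_above:
  fixes S :: "real^'n^'n"
  assumes sym: "transpose S = S" and f: "0 \<le> f"
  shows "bdd_above ((\<lambda>B. - frob B S + f * root CARD('n) (det B)) ` S1)"
proof -
  let ?d = "CARD('n)"
  obtain w where w: "\<forall>v. (w \<bullet> (S *v w)) * (v \<bullet> v) \<le> v \<bullet> (S *v v)"
    using quadratic_form_sphere_min by blast
  define c where "c = - (w \<bullet> (S *v w))"
  have "- frob B S + f * root ?d (det B) \<le> c + f / ?d" if "B \<in> S1" for B
  proof -
    have B: "psd_mat B" "trace B = 1" using that by (auto simp: S1_iff)
    have "psd_mat (S + c *\<^sub>R mat 1)"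
      by (rule psd_mat_add_scaleR_id[OF sym]) (use w in \<open>simp add: c_def\<close>)
    then have "0 \<le> trace (B ** (S + c *\<^sub>R mat 1))" by (rule psd_trace_mult_nonneg[OF B(1)])
    also have "\<dots> = frob B S + c"
      using B frob_symmetric[OF psd_mat_symmetric[OF B(1)]]
      by (simp add: matrix_add_ldistrib matrix_scalar_ac matrix_mul_rid trace_add trace_scaleR)
    finally have "- frob B S \<le> c" by simp
    moreover have "?d * root ?d (det B) \<le> 1" using psd_root_det_le_trace[OF B(1)] B(2) by simp
    then have "f * (?d * root ?d (det B)) \<le> f" using f by (rule mult_left_le)
    then have "f * root ?d (det B) \<le> f / ?d" by (simp add: le_divide_eq mult_ac)
    ultimately show ?thesis by simp
  qed
  then show ?thesis by (intro bdd_aboveI2) blast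
qed

text \<open>The witness is the rank-one projection onto a direction in which \<open>S\<close> is not positive.\<close>

lemma bellman_nonneg_if_not_pd:
  fixes S :: "real^'n^'n"
  assumes d: "CARD('n) \<ge> 2" and sym: "transpose S = S" and f: "0 \<le> f" and not_pd: "\<not> pd_mat S"
  shows "0 \<le> bellman S f"
proof -
  obtain v where v: "v \<noteq> 0" "v \<bullet> (S *v v) \<le> 0"
    using sym not_pd by (auto simp: pd_mat_def sym_mat_def not_less)
  define w where "w = v /\<^sub>R norm v"
  have "norm w = 1" using v by (simp add: w_def)
  then have S1: "outer_mat w \<in> S1" by (rule outer_mat_S1)
  have "w \<bullet> (S *v w) = (v \<bullet> (S *v v)) / (norm v)\<^sup>2"
    unfolding w_def by (rule quadratic_form_normalize)
  then have "w \<bullet> (S *v w) \<le> 0" using v by (simp add: divide_le_0_iff)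
  moreover have "psd_mat (outer_mat w)" using S1 by (simp add: S1_iff)
  then have "frob (outer_mat w) S = w \<bullet> (S *v w)"
    by (simp add: frob_symmetric psd_mat_symmetric trace_outer_mat_mult)
  ultimately have "0 \<le> - frob (outer_mat w) S + f * root CARD('n) (det (outer_mat w))"
    by (simp add: det_outer_mat[OF d])
  then show ?thesis
    unfolding bellman_def using cSUP_upper2[OF bellman_bdd_above[OF sym f] S1] by blast
qed

text \<open>The witness \<open>B = S\<^sup>-\<^sup>1 / tr S\<^sup>-\<^sup>1\<close> is the one for which the AM--GM bound \<open>tr (B S) \<ge> d (det B det S)\<^bsup>1/d\<^esup>\<close> is an equality.\<close>

lemma bellman_nonneg_if_pd:
  fixes S :: "real^'n^'n"
  assumes S: "pd_mat S" and f: "0 \<le> f" and MA: "0 \<le> monge_ampere S f"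
  shows "0 \<le> bellman S f"
proof -
  let ?d = "CARD('n)"
  obtain S' where S': "S' ** S = mat 1" "pd_mat S'" using pd_mat_inverse[OF S] by blast
  define t where "t = trace S'"
  have t: "0 < t" unfolding t_def by (rule pd_trace_pos[OF S'(2)])
  define B where "B = (1 / t) *\<^sub>R S'"
  have "0 \<le> x \<bullet> (S' *v x)" for x
    using S'(2) by (cases "x = 0") (auto simp: pd_mat_def less_imp_le)
  then have "psd_mat B"
    using S'(2) t by (simp add: B_def pd_mat_def psd_mat_def sym_mat_def transpose_scalar
        scaleR_matrix_vector_assoc[symmetric])
  moreover have "trace B = 1" using t by (simp add: B_def trace_scaleR t_def)
  ultimately have S1: "B \<in> S1" by (simp add: S1_iff)
  have "frob B S = ?d / t"
    using frob_symmetric[OF psd_mat_symmetric[OF \<open>psd_mat B\<close>]] S'(1)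
    by (simp add: B_def scalar_matrix_assoc[symmetric] trace_scaleR trace_I)
  define r where "r = root ?d (det S)"
  have r: "0 < r" using pd_det_pos[OF S] by (simp add: r_def)
  have "r \<le> f / ?d"
    using MA f unfolding r_def by (intro root_ge_of_power_ge) (simp_all add: monge_ampere_def)
  then have "?d * r \<le> f" by (simp add: le_divide_eq mult.commute)
  have "det S' * det S = 1" using S'(1) det_mul[of S' S] by simp
  then have "det S' = 1 / det S" using pd_det_pos[OF S] by (simp add: field_simps)
  then have "det B = (1 / t) ^ ?d * (1 / det S)" by (simp add: B_def det_scaleR)
  then have "root ?d (det B) = (1 / t) * (1 / r)"
    using t by (simp add: r_def real_root_mult real_root_divide real_root_power_cancel)
  then have "- frob B S + f * root ?d (det B) = (f - ?d * r) / (t * r)"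
    using t r \<open>frob B S = ?d / t\<close> by (simp add: field_simps)
  also have "\<dots> \<ge> 0" using \<open>?d * r \<le> f\<close> t r by simp
  finally show ?thesis
    unfolding bellman_def
    using cSUP_upper2[OF bellman_bdd_above[OF pd_mat_symmetric[OF S] f] S1] by blast
qed

section \<open>Quadratic test functions\<close>

lemma taylor_second_order_segment:
  fixes \<phi> :: "real^'n \<Rightarrow> real" and g :: "real^'n \<Rightarrow> real^'n" and Hs :: "real^'n \<Rightarrow> real^'n^'n"
  assumes d\<phi>: "\<And>y. y \<in> G \<Longrightarrow> (\<phi> has_derivative (\<lambda>h. g y \<bullet> h)) (at y)"
    and dg: "\<And>y. y \<in> G \<Longrightarrow> (g has_derivative (\<lambda>h. Hs y *v h)) (at y)"
    and segment: "\<And>t. 0 \<le> t \<Longrightarrow> t \<le> 1 \<Longrightarrow> x + t *\<^sub>R h \<in> G"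
  shows "\<exists>t. 0 < t \<and> t < 1 \<and> \<phi> (x + h) = \<phi> x + g x \<bullet> h + h \<bullet> (Hs (x + t *\<^sub>R h) *v h) / 2"
proof -
  define D :: "nat \<Rightarrow> real \<Rightarrow> real" where
    "D m t = (if m = 0 then \<phi> (x + t *\<^sub>R h) else if m = 1 then g (x + t *\<^sub>R h) \<bullet> h
              else h \<bullet> (Hs (x + t *\<^sub>R h) *v h))" for m t
  have D_simps: "D 0 = (\<lambda>t. \<phi> (x + t *\<^sub>R h))" "D (Suc 0) = (\<lambda>t. g (x + t *\<^sub>R h) \<bullet> h)"
    "D (Suc (Suc 0)) = (\<lambda>t. h \<bullet> (Hs (x + t *\<^sub>R h) *v h))"
    by (simp_all add: D_def fun_eq_iff)
  have line: "((\<lambda>t. x + t *\<^sub>R h) has_derivative (\<lambda>s. s *\<^sub>R h)) (at t)" for t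
    by (auto intro!: derivative_eq_intros)
  have "(D m has_real_derivative D (Suc m) t) (at t)" if "m < 2" "0 \<le> t" "t \<le> 1" for m t
  proof -
    have y: "x + t *\<^sub>R h \<in> G" using segment that by blast
    consider "m = 0" | "m = Suc 0" using \<open>m < 2\<close> by linarith
    then show ?thesis
    proof cases
      case 1
      show ?thesis unfolding 1 has_field_derivative_def D_simps
        by (rule has_derivative_eq_rhs[OF diff_chain_at[OF line d\<phi>[OF y], unfolded o_def]])
          (simp add: fun_eq_iff mult.commute)
    next
      case 2
      show ?thesis unfolding 2 has_field_derivative_def D_simps
        by (rule has_derivative_eq_rhs[OF has_derivative_inner_left[OF diff_chain_at[OF line dg[OF y], unfolded o_def]]])
          (simp add: fun_eq_iff matrix_vector_mult_scaleR inner_commute mult.commute)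
    qed
  qed
  then obtain t where t: "0 < t" "t < 1"
    "D 0 1 = (\<Sum>m<2. D m 0 / fact m * (1 - 0) ^ m) + D 2 t / fact 2 * (1 - 0) ^ 2"
    using Taylor_up[of 2 D "D 0" 0 1 0] by auto
  then show ?thesis by (auto simp: D_simps numeral_2_eq_2)
qed

lemma taylor_second_order_remainder_le:
  fixes \<phi> :: "real^'n \<Rightarrow> real" and g :: "real^'n \<Rightarrow> real^'n" and Hs :: "real^'n \<Rightarrow> real^'n^'n"
  assumes d\<phi>: "\<And>y. y \<in> G \<Longrightarrow> (\<phi> has_derivative (\<lambda>h. g y \<bullet> h)) (at y)"
    and dg: "\<And>y. y \<in> G \<Longrightarrow> (g has_derivative (\<lambda>h. Hs y *v h)) (at y)"
    and segment: "\<And>t. 0 \<le> t \<Longrightarrow> t \<le> 1 \<Longrightarrow> x + t *\<^sub>R h \<in> G"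
    and close: "\<And>t. 0 \<le> t \<Longrightarrow> t \<le> 1 \<Longrightarrow> real CARD('n) * norm (Hs (x + t *\<^sub>R h) - Hs x) \<le> e"
  shows "\<bar>\<phi> (x + h) - \<phi> x - g x \<bullet> h - h \<bullet> (Hs x *v h) / 2\<bar> \<le> e * (norm h)\<^sup>2 / 2"
proof -
  obtain t where t: "0 < t" "t < 1"
    and eq: "\<phi> (x + h) = \<phi> x + g x \<bullet> h + h \<bullet> (Hs (x + t *\<^sub>R h) *v h) / 2"
    using taylor_second_order_segment[OF d\<phi> dg segment] by blast
  have rem: "\<phi> (x + h) - \<phi> x - g x \<bullet> h - h \<bullet> (Hs x *v h) / 2
      = h \<bullet> ((Hs (x + t *\<^sub>R h) - Hs x) *v h) / 2"
    by (simp add: eq matrix_vector_mult_diff_rdistrib inner_diff_right)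
  have "\<bar>h \<bullet> ((Hs (x + t *\<^sub>R h) - Hs x) *v h)\<bar>
      \<le> real CARD('n) * norm (Hs (x + t *\<^sub>R h) - Hs x) * (norm h)\<^sup>2"
    by (rule quadratic_form_abs_le)
  also have "\<dots> \<le> e * (norm h)\<^sup>2" using close t by (intro mult_right_mono) auto
  finally show ?thesis unfolding rem by simp
qed

lemma C2_hess_second_order_approx:
  fixes \<phi> :: "real^'n \<Rightarrow> real"
  assumes C2: "C2_hess G \<phi> Hs" and G: "open G" "x \<in> G" and e: "e > 0"
  shows "\<exists>p r. r > 0 \<and> ball x r \<subseteq> G \<and> (\<forall>y\<in>ball x r.
    \<bar>\<phi> y - \<phi> x - p \<bullet> (y - x) - (y - x) \<bullet> (Hs x *v (y - x)) / 2\<bar> \<le> e * (norm (y - x))\<^sup>2)"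
proof -
  obtain g where d\<phi>: "\<And>y. y \<in> G \<Longrightarrow> (\<phi> has_derivative (\<lambda>h. g y \<bullet> h)) (at y)"
    and dg: "\<And>y. y \<in> G \<Longrightarrow> (g has_derivative (\<lambda>h. Hs y *v h)) (at y)"
    and cH: "continuous_on G Hs"
    using C2 unfolding C2_hess_def by blast
  define K where "K = real CARD('n)"
  have K: "K > 0" by (simp add: K_def)
  have "isCont Hs x" using cH G continuous_on_eq_continuous_at by blast
  then obtain r1 where r1: "r1 > 0" "\<And>y. dist y x < r1 \<Longrightarrow> dist (Hs y) (Hs x) < e / K"
    using K e unfolding continuous_at_eps_delta by (metis divide_pos_pos)
  obtain r0 where r0: "r0 > 0" "ball x r0 \<subseteq> G" using G open_contains_ball by blast
  define r where "r = min r0 r1"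
  have bound: "\<bar>\<phi> (x + h) - \<phi> x - g x \<bullet> h - h \<bullet> (Hs x *v h) / 2\<bar> \<le> e * (norm h)\<^sup>2"
    if h: "norm h < r" for h
  proof -
    have near: "dist (x + t *\<^sub>R h) x < r" if "0 \<le> t" "t \<le> 1" for t
      using h that mult_left_le_one_le[of "norm h" t] by (simp add: dist_norm)
    have "\<bar>\<phi> (x + h) - \<phi> x - g x \<bullet> h - h \<bullet> (Hs x *v h) / 2\<bar> \<le> e * (norm h)\<^sup>2 / 2"
    proof (rule taylor_second_order_remainder_le[OF d\<phi> dg])
      fix t :: real
      assume "0 \<le> t" "t \<le> 1"
      with near have "dist (x + t *\<^sub>R h) x < r0" "dist (x + t *\<^sub>R h) x < r1" by (auto simp: r_def)
      then show "x + t *\<^sub>R h \<in> G" using r0(2) by (auto simp: dist_commute)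
      from r1(2)[OF \<open>dist (x + t *\<^sub>R h) x < r1\<close>]
      show "real CARD('n) * norm (Hs (x + t *\<^sub>R h) - Hs x) \<le> e"
        using K by (simp add: K_def dist_norm field_simps)
    qed
    moreover have "0 \<le> e * (norm h)\<^sup>2" using e by simp
    ultimately show ?thesis by linarith
  qed
  have "\<forall>y\<in>ball x r.
      \<bar>\<phi> y - \<phi> x - g x \<bullet> (y - x) - (y - x) \<bullet> (Hs x *v (y - x)) / 2\<bar> \<le> e * (norm (y - x))\<^sup>2"
  proof
    fix y
    assume "y \<in> ball x r"
    then have "norm (y - x) < r" by (simp add: dist_norm norm_minus_commute)
    from bound[OF this] show "\<bar>\<phi> y - \<phi> x - g x \<bullet> (y - x) - (y - x) \<bullet> (Hs x *v (y - x)) / 2\<bar>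
        \<le> e * (norm (y - x))\<^sup>2" by simp
  qed
  moreover have "r > 0" "ball x r \<subseteq> G" using r0 r1 by (auto simp: r_def)
  ultimately show ?thesis by blast
qed

definition quadratic_at :: "real \<Rightarrow> real^'n \<Rightarrow> real^'n \<Rightarrow> real^'n^'n \<Rightarrow> real^'n \<Rightarrow> real" where
  "quadratic_at c p x M y = c + p \<bullet> (y - x) + (y - x) \<bullet> (M *v (y - x)) / 2"

lemma quadratic_at_center [simp]: "quadratic_at c p x M x = c"
  by (simp add: quadratic_at_def)

lemma C2_hess_quadratic_at:
  fixes M :: "real^'n^'n"
  assumes sym: "transpose M = M"
  shows "C2_hess G (quadratic_at c p x M) (\<lambda>_. M)"
  unfolding C2_hess_def
proof (intro exI[of _ "\<lambda>y. p + M *v (y - x)"] conjI ballI)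
  fix y
  have "(quadratic_at c p x M has_derivative
      (\<lambda>h. p \<bullet> h + (h \<bullet> (M *v (y - x)) + (y - x) \<bullet> (M *v h)) / 2)) (at y)"
    unfolding quadratic_at_def
    by (auto intro!: derivative_eq_intros bounded_linear.has_derivative[OF matrix_vector_mul_bounded_linear]
        simp: matrix_vector_mult_diff_distrib)
  moreover have "(\<lambda>h. p \<bullet> h + (h \<bullet> (M *v (y - x)) + (y - x) \<bullet> (M *v h)) / 2)
      = (\<lambda>h. (p + M *v (y - x)) \<bullet> h)"
  proof
    fix h
    have "(y - x) \<bullet> (M *v h) = h \<bullet> (M *v (y - x))"
      using symmetric_matrix_inner_commute[OF sym, of h "y - x"] by (simp add: inner_commute)
    then show "p \<bullet> h + (h \<bullet> (M *v (y - x)) + (y - x) \<bullet> (M *v h)) / 2 = (p + M *v (y - x)) \<bullet> h"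
      by (simp add: inner_add_left inner_add_right inner_commute)
  qed
  ultimately show "(quadratic_at c p x M has_derivative (\<lambda>h. (p + M *v (y - x)) \<bullet> h)) (at y)"
    by simp
  show "((\<lambda>y. p + M *v (y - x)) has_derivative (\<lambda>h. M *v h)) (at y)"
    by (auto intro!: derivative_eq_intros bounded_linear.has_derivative[OF matrix_vector_mul_bounded_linear]
        simp: matrix_vector_mult_diff_distrib)
next
  show "continuous_on G (\<lambda>y. p + M *v (y - x))"
    unfolding matrix_vector_mult_diff_distrib
    by (intro continuous_intros continuous_on_id linear_continuous_on matrix_vector_mul_linear)
qed simp

lemma symmetric_quadratic_form_convex_combination:
  fixes M :: "real^'n^'n"
  assumes "transpose M = M"
  shows "((1 - t) *\<^sub>R a + t *\<^sub>R b) \<bullet> (M *v ((1 - t) *\<^sub>R a + t *\<^sub>R b))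
    = (1 - t) * (a \<bullet> (M *v a)) + t * (b \<bullet> (M *v b)) - t * (1 - t) * ((a - b) \<bullet> (M *v (a - b)))"
proof -
  have "b \<bullet> (M *v a) = a \<bullet> (M *v b)"
    using symmetric_matrix_inner_commute[OF assms, of b a] by (simp add: inner_commute)
  then show ?thesis
    by (simp add: matrix_vector_right_distrib matrix_vector_mult_scaleR matrix_vector_mult_diff_distrib
        inner_add_left inner_add_right inner_diff_left inner_diff_right algebra_simps)
qed

lemma convex_on_quadratic_at:
  fixes M :: "real^'n^'n"
  assumes M: "psd_mat M" and G: "convex G"
  shows "convex_on G (quadratic_at c p x M)"
proof (rule convex_onI[OF _ G])
  fix t :: real and a b :: "real^'n"
  assume t: "0 < t" "t < 1"
  define A B where "A = a - x" and "B = b - x"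
  define qA qB qAB where "qA = A \<bullet> (M *v A)" and "qB = B \<bullet> (M *v B)"
    and "qAB = (A - B) \<bullet> (M *v (A - B))"
  have z: "(1 - t) *\<^sub>R a + t *\<^sub>R b - x = (1 - t) *\<^sub>R A + t *\<^sub>R B"
    by (simp add: A_def B_def algebra_simps)
  have lin: "p \<bullet> ((1 - t) *\<^sub>R A + t *\<^sub>R B) = (1 - t) * (p \<bullet> A) + t * (p \<bullet> B)"
    by (simp add: inner_add_right)
  have at_comb: "quadratic_at c p x M ((1 - t) *\<^sub>R a + t *\<^sub>R b)
      = c + ((1 - t) * (p \<bullet> A) + t * (p \<bullet> B)) + ((1 - t) * qA + t * qB - t * (1 - t) * qAB) / 2"
    unfolding quadratic_at_def z lin symmetric_quadratic_form_convex_combination[OF psd_mat_symmetric[OF M]] qA_def qB_def qAB_def ..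
  have at_a: "quadratic_at c p x M a = c + p \<bullet> A + qA / 2"
    and at_b: "quadratic_at c p x M b = c + p \<bullet> B + qB / 2"
    by (simp_all add: quadratic_at_def A_def B_def qA_def qB_def)
  have "(1 - t) * (c + p \<bullet> A + qA / 2) + t * (c + p \<bullet> B + qB / 2)
      - (c + ((1 - t) * (p \<bullet> A) + t * (p \<bullet> B)) + ((1 - t) * qA + t * qB - t * (1 - t) * qAB) / 2)
      = t * (1 - t) * qAB / 2"
    by (simp add: field_simps)
  moreover have "0 \<le> t * (1 - t) * qAB" using t M by (simp add: qAB_def psd_mat_def)
  ultimately show "quadratic_at c p x M ((1 - t) *\<^sub>R a + t *\<^sub>R b)
      \<le> (1 - t) * quadratic_at c p x M a + t * quadratic_at c p x M b"
    unfolding at_comb at_a at_b by linarith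
qed

lemma quadratic_at_add_scaleR_id:
  "quadratic_at c p x (symm_part H + e *\<^sub>R mat 1) y
    = c + p \<bullet> (y - x) + (y - x) \<bullet> (H *v (y - x)) / 2 + e / 2 * (norm (y - x))\<^sup>2"
  by (simp add: quadratic_at_def quadratic_form_add_scaleR_id quadratic_form_symm_part
      power2_norm_eq_inner field_simps)

lemma C2_hess_quadratic_bounds:
  fixes \<phi> :: "real^'n \<Rightarrow> real"
  assumes "C2_hess G \<phi> Hs" "open G" "x \<in> G" "e > 0"
  shows "\<exists>p r. r > 0 \<and> (\<forall>y\<in>G. dist y x < r \<longrightarrow>
    quadratic_at (\<phi> x) p x (symm_part (Hs x) + (- e) *\<^sub>R mat 1) y \<le> \<phi> y \<and>
    \<phi> y \<le> quadratic_at (\<phi> x) p x (symm_part (Hs x) + e *\<^sub>R mat 1) y)"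
proof -
  obtain p r where r: "r > 0" and approx: "\<forall>y\<in>ball x r.
      \<bar>\<phi> y - \<phi> x - p \<bullet> (y - x) - (y - x) \<bullet> (Hs x *v (y - x)) / 2\<bar> \<le> e / 2 * (norm (y - x))\<^sup>2"
    using C2_hess_second_order_approx[OF assms(1-3), of "e / 2"] \<open>e > 0\<close> by auto
  have "quadratic_at (\<phi> x) p x (symm_part (Hs x) + (- e) *\<^sub>R mat 1) y \<le> \<phi> y \<and>
      \<phi> y \<le> quadratic_at (\<phi> x) p x (symm_part (Hs x) + e *\<^sub>R mat 1) y"
    if "dist y x < r" for y
  proof -
    have "y \<in> ball x r" using that by (simp add: dist_commute)
    with approx have "\<bar>\<phi> y - \<phi> x - p \<bullet> (y - x) - (y - x) \<bullet> (Hs x *v (y - x)) / 2\<bar>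
        \<le> e / 2 * (norm (y - x))\<^sup>2" by blast
    then show ?thesis unfolding quadratic_at_add_scaleR_id abs_le_iff by linarith
  qed
  with r show ?thesis by blast
qed

lemma loc_max_at_diff_if_le:
  assumes max: "loc_max_at G (\<lambda>y. u y - \<phi> y) x" and r: "r > 0"
    and le: "\<forall>y\<in>G. dist y x < r \<longrightarrow> \<phi> y \<le> q y" and eq: "q x = \<phi> x"
  shows "loc_max_at G (\<lambda>y. u y - q y) x"
proof -
  obtain e where "e > 0" "\<forall>y\<in>G. dist y x < e \<longrightarrow> u y - \<phi> y \<le> u x - \<phi> x"
    using max unfolding loc_max_at_def by blast
  with r le eq show ?thesis
    unfolding loc_max_at_def by (intro exI[of _ "min e r"]) force
qed

lemma loc_min_at_diff_if_ge:
  assumes min: "loc_min_at G (\<lambda>y. u y - \<phi> y) x" and r: "r > 0"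
    and ge: "\<forall>y\<in>G. dist y x < r \<longrightarrow> q y \<le> \<phi> y" and eq: "q x = \<phi> x"
  shows "loc_min_at G (\<lambda>y. u y - q y) x"
proof -
  obtain e where "e > 0" "\<forall>y\<in>G. dist y x < e \<longrightarrow> u x - \<phi> x \<le> u y - \<phi> y"
    using min unfolding loc_min_at_def by blast
  with r ge eq show ?thesis
    unfolding loc_min_at_def by (intro exI[of _ "min e r"]) force
qed

lemma second_difference_nonneg_if_touching_above:
  assumes G: "open G" and u: "convex_on G u" and x: "x \<in> G"
    and max: "loc_max_at G (\<lambda>y. u y - \<phi> y) x"
  shows "\<exists>r>0. \<forall>h. norm h < r \<longrightarrow> 2 * \<phi> x \<le> \<phi> (x + h) + \<phi> (x - h)"
proof -
  obtain e where e: "e > 0" "\<forall>y\<in>G. dist y x < e \<longrightarrow> u y - \<phi> y \<le> u x - \<phi> x"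
    using max unfolding loc_max_at_def by blast
  obtain r0 where r0: "r0 > 0" "ball x r0 \<subseteq> G" using G x open_contains_ball by blast
  have "2 * \<phi> x \<le> \<phi> (x + h) + \<phi> (x - h)" if h: "norm h < min e r0" for h
  proof -
    have in_G: "x + h \<in> G" "x - h \<in> G" using h r0 by (auto simp: dist_norm)
    have "u ((1 - 1/2) *\<^sub>R (x + h) + (1/2) *\<^sub>R (x - h)) \<le> (1 - 1/2) * u (x + h) + (1/2) * u (x - h)"
      using convex_onD[OF u, of "1/2"] in_G by simp
    moreover have "(1 - 1/2) *\<^sub>R (x + h) + (1/2) *\<^sub>R (x - h) = x"
      by (simp add: vec_eq_iff algebra_simps)
    moreover have "u (x + h) - \<phi> (x + h) \<le> u x - \<phi> x" "u (x - h) - \<phi> (x - h) \<le> u x - \<phi> x"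
      using e(2) in_G h by (auto simp: dist_norm)
    ultimately show ?thesis by simp
  qed
  then show ?thesis using e r0 by (intro exI[of _ "min e r0"]) auto
qed

lemma hessian_lower_bound_if_second_difference_nonneg:
  fixes \<phi> :: "real^'n \<Rightarrow> real"
  assumes C2: "C2_hess G \<phi> Hs" and G: "open G" "x \<in> G" and e: "e > 0"
    and diff: "\<exists>r>0. \<forall>h. norm h < r \<longrightarrow> 2 * \<phi> x \<le> \<phi> (x + h) + \<phi> (x - h)"
  shows "- (2 * e) * (v \<bullet> v) \<le> v \<bullet> (Hs x *v v)"
proof -
  obtain r where r: "r > 0" "\<forall>h. norm h < r \<longrightarrow> 2 * \<phi> x \<le> \<phi> (x + h) + \<phi> (x - h)"
    using diff by blast
  obtain p r' where r': "r' > 0" and approx: "\<forall>y\<in>ball x r'.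
      \<bar>\<phi> y - \<phi> x - p \<bullet> (y - x) - (y - x) \<bullet> (Hs x *v (y - x)) / 2\<bar> \<le> e * (norm (y - x))\<^sup>2"
    using C2_hess_second_order_approx[OF C2 G e] by auto
  define t where "t = min r r' / (2 * (norm v + 1))"
  define h where "h = t *\<^sub>R v"
  have nv: "0 < norm v + 1" using norm_ge_zero[of v] by linarith
  then have t: "t > 0" unfolding t_def using r r' by (intro divide_pos_pos mult_pos_pos) auto
  have "norm h = t * norm v" using t by (simp add: h_def)
  also have "\<dots> < t * (norm v + 1)" using t by simp
  also have "\<dots> = min r r' / 2" unfolding t_def using nv by (simp add: field_simps)
  finally have h: "norm h < r" "norm h < r'" using r r' by auto
  have "x + h \<in> ball x r'" "x - h \<in> ball x r'" using h by (auto simp: dist_norm)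
  have "Hs x *v (- h) = - (Hs x *v h)" by (rule linear_neg[OF matrix_vector_mul_linear])
  then have "\<bar>\<phi> (x + h) - \<phi> x - p \<bullet> h - h \<bullet> (Hs x *v h) / 2\<bar> \<le> e * (norm h)\<^sup>2"
    and "\<bar>\<phi> (x - h) - \<phi> x + p \<bullet> h - h \<bullet> (Hs x *v h) / 2\<bar> \<le> e * (norm h)\<^sup>2"
    using approx[rule_format, OF \<open>x + h \<in> ball x r'\<close>] approx[rule_format, OF \<open>x - h \<in> ball x r'\<close>]
    by simp_all
  with r(2) h have "0 \<le> h \<bullet> (Hs x *v h) + 2 * e * (norm h)\<^sup>2"
    by (auto simp: abs_le_iff)
  also have "\<dots> = t\<^sup>2 * (v \<bullet> (Hs x *v v) + 2 * e * (v \<bullet> v))"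
  proof -
    have "(norm h)\<^sup>2 = t\<^sup>2 * (v \<bullet> v)" by (simp add: h_def power_mult_distrib power2_norm_eq_inner)
    then show ?thesis
      by (simp add: h_def matrix_vector_mult_scaleR power2_eq_square algebra_simps)
  qed
  finally show ?thesis using t by (simp add: zero_le_mult_iff)
qed

lemma psd_symm_part_hessian_if_second_difference_nonneg:
  fixes \<phi> :: "real^'n \<Rightarrow> real"
  assumes C2: "C2_hess G \<phi> Hs" and G: "open G" "x \<in> G"
    and diff: "\<exists>r>0. \<forall>h. norm h < r \<longrightarrow> 2 * \<phi> x \<le> \<phi> (x + h) + \<phi> (x - h)"
  shows "psd_mat (symm_part (Hs x))"
proof -
  have "0 \<le> v \<bullet> (Hs x *v v)" for v
  proof (rule ccontr)
    assume neg: "\<not> 0 \<le> v \<bullet> (Hs x *v v)"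
    then have vv: "0 < v \<bullet> v" by (cases "v = 0") auto
    define e where "e = - (v \<bullet> (Hs x *v v)) / (4 * (v \<bullet> v))"
    have "e > 0" unfolding e_def using neg vv by (intro divide_pos_pos) auto
    from hessian_lower_bound_if_second_difference_nonneg[OF C2 G this diff, of v]
    show False using neg vv by (simp add: e_def)
  qed
  then show ?thesis
    by (simp add: psd_mat_def sym_mat_def symm_part_symmetric quadratic_form_symm_part)
qed

section \<open>Viscosity solutions\<close>

lemma visc_sub_convex_quadratic_upper:
  fixes \<phi> :: "real^'n \<Rightarrow> real"
  assumes \<Omega>: "open \<Omega>" "convex \<Omega>" and sub: "visc_sub_convex F \<Omega> u"
    and C2: "C2_hess \<Omega> \<phi> Hs" and x: "x \<in> \<Omega>" and max: "loc_max_at \<Omega> (\<lambda>y. u y - \<phi> y) x"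
    and e: "0 < e" and psd: "psd_mat (symm_part (Hs x) + e *\<^sub>R mat 1)"
  shows "F (symm_part (Hs x) + e *\<^sub>R mat 1) x \<le> 0"
proof -
  obtain p r where r: "r > 0" and upper: "\<forall>y\<in>\<Omega>. dist y x < r \<longrightarrow>
      \<phi> y \<le> quadratic_at (\<phi> x) p x (symm_part (Hs x) + e *\<^sub>R mat 1) y"
    using C2_hess_quadratic_bounds[OF C2 \<Omega>(1) x e] by blast
  let ?q = "quadratic_at (\<phi> x) p x (symm_part (Hs x) + e *\<^sub>R mat 1)"
  have touch: "loc_max_at \<Omega> (\<lambda>y. u y - ?q y) x"
    by (rule loc_max_at_diff_if_le[OF max r upper]) simp
  have C2_q: "C2_hess \<Omega> ?q (\<lambda>_. symm_part (Hs x) + e *\<^sub>R mat 1)"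
    by (rule C2_hess_quadratic_at[OF psd_mat_symmetric[OF psd]])
  have convex_q: "convex_on \<Omega> ?q" by (rule convex_on_quadratic_at[OF psd \<Omega>(2)])
  have test: "\<And>\<psi> Ps. C2_hess \<Omega> \<psi> Ps \<Longrightarrow> convex_on \<Omega> \<psi> \<Longrightarrow> loc_max_at \<Omega> (\<lambda>y. u y - \<psi> y) x
      \<Longrightarrow> F (Ps x) x \<le> 0"
    using sub x unfolding visc_sub_convex_def by blast
  from test[OF C2_q convex_q touch] show ?thesis by simp
qed

lemma visc_super_convex_quadratic_lower:
  fixes \<phi> :: "real^'n \<Rightarrow> real"
  assumes \<Omega>: "open \<Omega>" "convex \<Omega>" and super: "visc_super_convex F \<Omega> u"
    and C2: "C2_hess \<Omega> \<phi> Hs" and x: "x \<in> \<Omega>" and min: "loc_min_at \<Omega> (\<lambda>y. u y - \<phi> y) x"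
    and e: "0 < e" and psd: "psd_mat (symm_part (Hs x) + (- e) *\<^sub>R mat 1)"
  shows "0 \<le> F (symm_part (Hs x) + (- e) *\<^sub>R mat 1) x"
proof -
  obtain p r where r: "r > 0" and lower: "\<forall>y\<in>\<Omega>. dist y x < r \<longrightarrow>
      quadratic_at (\<phi> x) p x (symm_part (Hs x) + (- e) *\<^sub>R mat 1) y \<le> \<phi> y"
    using C2_hess_quadratic_bounds[OF C2 \<Omega>(1) x e] by blast
  let ?q = "quadratic_at (\<phi> x) p x (symm_part (Hs x) + (- e) *\<^sub>R mat 1)"
  have touch: "loc_min_at \<Omega> (\<lambda>y. u y - ?q y) x"
    by (rule loc_min_at_diff_if_ge[OF min r lower]) simp
  have C2_q: "C2_hess \<Omega> ?q (\<lambda>_. symm_part (Hs x) + (- e) *\<^sub>R mat 1)"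
    by (rule C2_hess_quadratic_at[OF psd_mat_symmetric[OF psd]])
  have convex_q: "convex_on \<Omega> ?q" by (rule convex_on_quadratic_at[OF psd \<Omega>(2)])
  have test: "\<And>\<psi> Ps. C2_hess \<Omega> \<psi> Ps \<Longrightarrow> convex_on \<Omega> \<psi> \<Longrightarrow> loc_min_at \<Omega> (\<lambda>y. u y - \<psi> y) x
      \<Longrightarrow> 0 \<le> F (Ps x) x"
    using super x unfolding visc_super_convex_def by blast
  from test[OF C2_q convex_q touch] show ?thesis by simp
qed

lemma visc_sub_bellman_if_visc_sub_convex_monge_ampere:
  fixes \<Omega> :: "(real^'n) set" and f u :: "real^'n \<Rightarrow> real"
  assumes \<Omega>: "open \<Omega>" "convex \<Omega>" and f: "\<forall>x\<in>\<Omega>. 0 \<le> f x"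
    and sub: "visc_sub_convex (\<lambda>A x. monge_ampere A (f x)) \<Omega> u"
  shows "visc_sub (\<lambda>A x. bellman A (f x)) \<Omega> u"
  unfolding visc_sub_def
proof (intro conjI allI impI)
  show "usc_on \<Omega> u" using sub by (simp add: visc_sub_convex_def)
  fix \<phi> Hs x
  assume "C2_hess \<Omega> \<phi> Hs \<and> x \<in> \<Omega> \<and> loc_max_at \<Omega> (\<lambda>y. u y - \<phi> y) x"
  then have C2: "C2_hess \<Omega> \<phi> Hs" and x: "x \<in> \<Omega>" and max: "loc_max_at \<Omega> (\<lambda>y. u y - \<phi> y) x"
    by auto
  define S where "S = symm_part (Hs x)"
  have "convex_on \<Omega> u" using sub by (simp add: visc_sub_convex_def)
  from second_difference_nonneg_if_touching_above[OF \<Omega>(1) this x max]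
  have psd: "psd_mat S"
    unfolding S_def by (rule psd_symm_part_hessian_if_second_difference_nonneg[OF C2 \<Omega>(1) x])
  have det_e: "(f x / CARD('n)) ^ CARD('n) \<le> det (S + e *\<^sub>R mat 1)" if e: "0 < e" for e
  proof -
    have "psd_mat (S + e *\<^sub>R mat 1)"
    proof (rule psd_mat_add_scaleR_id[OF psd_mat_symmetric[OF psd]])
      fix v :: "real^'n"
      have "0 \<le> v \<bullet> (S *v v)" "0 \<le> e * (v \<bullet> v)" using psd e by (simp_all add: psd_mat_def)
      then show "- e * (v \<bullet> v) \<le> v \<bullet> (S *v v)" by linarith
    qed
    from visc_sub_convex_quadratic_upper[OF \<Omega> sub C2 x max e this[unfolded S_def]]
    show ?thesis by (simp add: S_def monge_ampere_def)
  qed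
  have "(f x / CARD('n)) ^ CARD('n) \<le> det S"
    by (rule det_ge_if_det_add_scaleR_ge[where r = 1 and N = "mat 1"]) (simp_all add: det_e)
  with psd f x have "bellman S (f x) \<le> 0" by (intro bellman_nonpos) (auto simp: monge_ampere_def)
  then show "bellman (Hs x) (f x) \<le> 0" unfolding bellman_symm_part[of "Hs x"] S_def .
qed

lemma visc_super_bellman_if_visc_super_convex_monge_ampere:
  fixes \<Omega> :: "(real^'n) set" and f u :: "real^'n \<Rightarrow> real"
  assumes d: "CARD('n) \<ge> 2" and \<Omega>: "open \<Omega>" "convex \<Omega>" and f: "\<forall>x\<in>\<Omega>. 0 \<le> f x"
    and super: "visc_super_convex (\<lambda>A x. monge_ampere A (f x)) \<Omega> u"
  shows "visc_super (\<lambda>A x. bellman A (f x)) \<Omega> u"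
  unfolding visc_super_def
proof (intro conjI allI impI)
  show "lsc_on \<Omega> u" using super by (simp add: visc_super_convex_def)
  fix \<phi> Hs x
  assume "C2_hess \<Omega> \<phi> Hs \<and> x \<in> \<Omega> \<and> loc_min_at \<Omega> (\<lambda>y. u y - \<phi> y) x"
  then have C2: "C2_hess \<Omega> \<phi> Hs" and x: "x \<in> \<Omega>" and min: "loc_min_at \<Omega> (\<lambda>y. u y - \<phi> y) x"
    by auto
  define S where "S = symm_part (Hs x)"
  have sym: "transpose S = S" by (simp add: S_def symm_part_symmetric)
  have fx: "0 \<le> f x" using f x by blast
  have "0 \<le> bellman S (f x)"
  proof (cases "pd_mat S")
    case False
    then show ?thesis by (rule bellman_nonneg_if_not_pd[OF d sym fx])
  next
    case True
    obtain l where l: "l > 0" "\<forall>v. l * (v \<bullet> v) \<le> v \<bullet> (S *v v)"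
      using pd_quadratic_form_ge[OF True] by blast
    have "det (S + e *\<^sub>R (- mat 1)) \<le> (f x / CARD('n)) ^ CARD('n)" if e: "0 < e" "e < l" for e
    proof -
      have "e * (v \<bullet> v) \<le> v \<bullet> (S *v v)" for v
        using l(2)[rule_format, of v] e mult_right_mono[of e l "v \<bullet> v"] by simp
      then have "psd_mat (S + (- e) *\<^sub>R mat 1)" by (intro psd_mat_add_scaleR_id[OF sym]) simp
      from visc_super_convex_quadratic_lower[OF \<Omega> super C2 x min e(1) this[unfolded S_def]]
      show ?thesis by (simp add: S_def monge_ampere_def)
    qed
    then have "det S \<le> (f x / CARD('n)) ^ CARD('n)" by (rule det_le_if_det_add_scaleR_le[OF l(1)])
    with True fx show ?thesis by (intro bellman_nonneg_if_pd) (auto simp: monge_ampere_def)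
  qed
  then show "0 \<le> bellman (Hs x) (f x)" unfolding bellman_symm_part[of "Hs x"] S_def .
qed

theorem theorem3p3:
  fixes \<Omega> :: "(real^'n) set" and f :: "real^'n \<Rightarrow> real" and u :: "real^'n \<Rightarrow> real"
  assumes "CARD('n) \<ge> 2"
    and "open \<Omega>" and "bounded \<Omega>" and "\<Omega> \<noteq> {}" and "convex \<Omega>" and "strictly_convex_set \<Omega>"
    and "continuous_on \<Omega> f" and "\<forall>x\<in>\<Omega>. 0 \<le> f x"
  shows "(visc_sub_convex (\<lambda>A x. monge_ampere A (f x)) \<Omega> u
            \<longrightarrow> visc_sub (\<lambda>A x. bellman A (f x)) \<Omega> u)
       \<and> (visc_super_convex (\<lambda>A x. monge_ampere A (f x)) \<Omega> u
            \<longrightarrow> visc_super (\<lambda>A x. bellman A (f x)) \<Omega> u)"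
  using visc_sub_bellman_if_visc_sub_convex_monge_ampere[OF assms(2,5,8)]
    visc_super_bellman_if_visc_super_convex_monge_ampere[OF assms(1,2,5,8)]
  by blast

end
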